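(* Let $A\in\mathbb{N}^{n\times m}$ have distinct columns. If $c\in\mathbb{R}^m$ generates an extreme ray of $C_{\mathrm{POLY\text{-}SAGE}}(A)$, then $\{a_i: i\in[m],\ c_i\ne 0\}$ is either a singleton or a simplicial circuit.
   Context: For $A\in\mathbb{N}^{n\times m}$ with distinct columns $a_i$ and $c\in\mathbb{R}^m$, a column $a_i$ is even if $a_i\in(2\mathbb{N})^n$. $\mathrm{Sig}(A,c)$ is $x\mapsto\sum_i c_i\exp(a_i^\top x)$; $C_{\mathrm{NNS}}(A)=\{c:\mathrm{Sig}(A,c)\ge 0\text{ on }\mathbb{R}^n\}$; $C_{\mathrm{AGE}}(A,k)=\{c\in C_{\mathrm{NNS}}(A): c_i\ge 0\ \forall i\ne k\}$; $C_{\mathrm{SAGE}}(A)=\sum_k C_{\mathrm{AGE}}(A,k)$. The signomial representative of $c$ is $\hat c$ with $\hat c_i=c_i$ if $a_i$ is even and $\hat c_i=-|c_i|$ otherwise; $C_{\mathrm{POLY\text{-}SAGE}}(A)=\{c\in\mathbb{R}^m:\hat c\in C_{\mathrm{SAGE}}(A)\}$. A finite point set $\{x_1,\dots,x_\ell\}$ is a circuit if it is affinely dependent but every proper subset is affinely independent; a circuit with $\ell$ elements is simplicial if its convex hull has exactly $\ell-1$ extreme points. *)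

theory Defs
  imports "HOL-Analysis.Analysis"
begin

text \<open>The matrix A in N^(n x m) is represented as A :: nat^'m^'n (rows indexed by 'n,
  columns by 'm). Column i, viewed as a point of R^n:\<close>
definition acol :: "nat^'m^'n \<Rightarrow> 'm \<Rightarrow> real^'n" where
  "acol A i = (\<chi> j. real (A $ j $ i))"

definition distinct_columns :: "nat^'m^'n \<Rightarrow> bool" where
  "distinct_columns A \<longleftrightarrow> (\<forall>i k. (\<chi> j. A $ j $ i) = (\<chi> j. A $ j $ k) \<longrightarrow> i = k)"

definition even_col :: "nat^'m^'n \<Rightarrow> 'm \<Rightarrow> bool" where
  "even_col A i \<longleftrightarrow> (\<forall>j. even (A $ j $ i))"

definition Sig :: "nat^'m::finite^'n \<Rightarrow> real^'m \<Rightarrow> real^'n \<Rightarrow> real" where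
  "Sig A c x = (\<Sum>i\<in>UNIV. c $ i * exp (acol A i \<bullet> x))"

definition C_NNS :: "nat^'m::finite^'n \<Rightarrow> (real^'m) set" where
  "C_NNS A = {c. \<forall>x. Sig A c x \<ge> 0}"

definition C_AGE :: "nat^'m::finite^'n \<Rightarrow> 'm \<Rightarrow> (real^'m) set" where
  "C_AGE A k = {c \<in> C_NNS A. \<forall>i. i \<noteq> k \<longrightarrow> c $ i \<ge> 0}"

definition C_SAGE :: "nat^'m::finite^'n \<Rightarrow> (real^'m) set" where
  "C_SAGE A = {c. \<exists>f :: 'm \<Rightarrow> real^'m. (\<forall>k. f k \<in> C_AGE A k) \<and> c = (\<Sum>k\<in>UNIV. f k)}"

definition sig_rep :: "nat^'m^'n \<Rightarrow> real^'m \<Rightarrow> real^'m" where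
  "sig_rep A c = (\<chi> i. if even_col A i then c $ i else - \<bar>c $ i\<bar>)"

definition C_POLY_SAGE :: "nat^'m::finite^'n \<Rightarrow> (real^'m) set" where
  "C_POLY_SAGE A = {c. sig_rep A c \<in> C_SAGE A}"

definition extreme_ray_gen :: "('a::real_vector) set \<Rightarrow> 'a \<Rightarrow> bool" where
  "extreme_ray_gen C c \<longleftrightarrow> c \<in> C \<and> c \<noteq> 0 \<and>
     (\<forall>x y. x \<in> C \<longrightarrow> y \<in> C \<longrightarrow> c = x + y \<longrightarrow>
        (\<exists>s t. s \<ge> 0 \<and> t \<ge> 0 \<and> x = s *\<^sub>R c \<and> y = t *\<^sub>R c))"

definition is_circuit :: "('a::real_vector) set \<Rightarrow> bool" where
  "is_circuit S \<longleftrightarrow> finite S \<and> affine_dependent S \<and> (\<forall>T. T \<subset> S \<longrightarrow> \<not> affine_dependent T)"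

definition simplicial_circuit :: "('a::euclidean_space) set \<Rightarrow> bool" where
  "simplicial_circuit S \<longleftrightarrow> is_circuit S \<and>
     card {x. x extreme_point_of (convex hull S)} = card S - 1"

end

theory Submission
  imports Defs "HOL-Real_Asymp.Real_Asymp"
begin

text \<open>Write \<open>d\<close> for the signomial representative of \<open>c\<close>. Extremality first puts \<open>d\<close>
  into a single cone \<open>C_AGE A k\<close>: a SAGE decomposition of \<open>d\<close> can be normalised so that each
  nonpositive coordinate is carried by its own summand only, and then every summand lifts to a
  POLY-SAGE vector below \<open>c\<close>. If \<open>d \<ge> 0\<close>, the support of \<open>c\<close> is a singleton, since
  otherwise \<open>c\<close> splits into two POLY-SAGE vectors with disjoint supports. Otherwise
  \<open>d $ k < 0\<close>, and convex duality for the AGE cone gives weights \<open>\<nu>\<close> on the rest \<open>T\<close> of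
  the support with barycentre \<open>a_k\<close> and relative entropy \<open>D(\<nu>, d) \<le> - ln (- d $ k)\<close>.
  Extremality forces \<open>\<nu> > 0\<close>, since a column of weight 0 could be split off, and forces the
  columns \<open>a_T\<close> to be affinely independent, since an affine dependence \<open>\<mu>\<close> gives two
  certificates \<open>\<nu> \<plusminus> t \<mu>\<close> that split \<open>c\<close> by AM-GM. So \<open>a_k\<close> is a strictly positive
  convex combination of affinely independent points, and the support is a simplicial circuit.\<close>

section \<open>Relative entropy\<close>

definition rel_entropy :: "'i set \<Rightarrow> ('i \<Rightarrow> real) \<Rightarrow> ('i \<Rightarrow> real) \<Rightarrow> real" where
  "rel_entropy T \<nu> w = (\<Sum>j\<in>T. \<nu> j * ln (\<nu> j) - \<nu> j * ln (w j))"

lemma continuous_on_x_ln_x: "continuous_on {0..} (\<lambda>x::real. x * ln x)"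
proof -
  have "continuous (at x within {0..}) (\<lambda>x::real. x * ln x)" if "0 \<le> x" for x
  proof (cases "x = 0")
    case True
    have "((\<lambda>x::real. x * ln x) \<longlongrightarrow> 0) (at_right 0)" by real_asymp
    then show ?thesis using True by (simp add: continuous_within at_within_Ici_at_right)
  next
    case False
    with that have "isCont (\<lambda>x::real. x * ln x) x" by (intro continuous_intros) auto
    then show ?thesis using continuous_at_imp_continuous_within by blast
  qed
  then show ?thesis using continuous_on_eq_continuous_within by auto
qed

lemma continuous_on_rel_entropy:
  "continuous_on {v::real^'i. \<forall>j\<in>T. 0 \<le> v $ j} (\<lambda>v. rel_entropy T (\<lambda>j. v $ j) w)"
proof -
  have x_ln_x: "continuous_on {v::real^'i. \<forall>j\<in>T. 0 \<le> v $ j} (\<lambda>v. v $ j * ln (v $ j))"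
    if "j \<in> T" for j
    by (rule continuous_on_compose2[OF continuous_on_x_ln_x]) (use that in \<open>auto intro: continuous_intros\<close>)
  show ?thesis
    unfolding rel_entropy_def by (intro continuous_on_sum continuous_on_diff ballI x_ln_x continuous_intros)
qed

text \<open>Weighted AM-GM (Jensen's inequality for \<open>exp\<close>) applied to the numbers
  \<open>w j * exp (p j \<bullet> x) / \<nu> j\<close>.\<close>
lemma exp_rel_entropy_le_sum_exp:
  fixes p :: "'i \<Rightarrow> 'a::real_inner"
  assumes "finite T" "\<And>j. j \<in> T \<Longrightarrow> 0 < \<nu> j" "\<And>j. j \<in> T \<Longrightarrow> 0 < w j" "sum \<nu> T = 1"
  shows "exp (- rel_entropy T \<nu> w + (\<Sum>j\<in>T. \<nu> j *\<^sub>R p j) \<bullet> x) \<le> (\<Sum>j\<in>T. w j * exp (p j \<bullet> x))"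
proof -
  have ne: "T \<noteq> {}" using assms(4) by auto
  define y where "y j = ln (w j) - ln (\<nu> j) + p j \<bullet> x" for j
  have "exp (\<Sum>j\<in>T. \<nu> j *\<^sub>R y j) \<le> (\<Sum>j\<in>T. \<nu> j * exp (y j))"
    using convex_on_sum[OF assms(1) ne exp_convex, of \<nu> y] assms(2,4) by (auto simp: less_imp_le)
  moreover have "(\<Sum>j\<in>T. \<nu> j *\<^sub>R y j) = - rel_entropy T \<nu> w + (\<Sum>j\<in>T. \<nu> j *\<^sub>R p j) \<bullet> x"
    by (simp add: y_def rel_entropy_def inner_sum_left sum.distrib algebra_simps sum_subtractf)
  moreover have "(\<Sum>j\<in>T. \<nu> j * exp (y j)) = (\<Sum>j\<in>T. w j * exp (p j \<bullet> x))"
  proof (rule sum.cong)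
    fix j assume "j \<in> T"
    then show "\<nu> j * exp (y j) = w j * exp (p j \<bullet> x)"
      using assms(2,3)[of j] by (simp add: y_def exp_add exp_diff)
  qed simp
  ultimately show ?thesis by simp
qed

lemma rel_entropy_gibbs_weights:
  fixes p :: "'i \<Rightarrow> 'a::real_inner" and x :: 'a
  assumes "finite T" "T \<noteq> {}" "\<And>j. j \<in> T \<Longrightarrow> 0 < w j"
  defines "Z \<equiv> \<Sum>j\<in>T. w j * exp (p j \<bullet> x)"
  defines "\<nu> \<equiv> \<lambda>j. w j * exp (p j \<bullet> x) / Z"
  shows "\<And>j. j \<in> T \<Longrightarrow> 0 < \<nu> j" "sum \<nu> T = 1"
    and "- rel_entropy T \<nu> w = ln Z - (\<Sum>j\<in>T. \<nu> j *\<^sub>R p j) \<bullet> x"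
proof -
  have Z: "0 < Z" unfolding Z_def using assms(1-3) by (intro sum_pos) auto
  then show "\<And>j. j \<in> T \<Longrightarrow> 0 < \<nu> j" using assms(3) by (simp add: \<nu>_def)
  show \<nu>_sum: "sum \<nu> T = 1" using Z by (simp add: \<nu>_def Z_def flip: sum_divide_distrib)
  have "\<nu> j * ln (\<nu> j) - \<nu> j * ln (w j) = \<nu> j * (p j \<bullet> x) - \<nu> j * ln Z" if "j \<in> T" for j
    using assms(3)[OF that] Z
    by (simp add: \<nu>_def ln_div ln_mult diff_divide_distrib add_divide_distrib algebra_simps)
  then have "rel_entropy T \<nu> w = (\<Sum>j\<in>T. \<nu> j * (p j \<bullet> x) - \<nu> j * ln Z)"
    unfolding rel_entropy_def by (rule sum.cong[OF refl])
  also have "\<dots> = (\<Sum>j\<in>T. \<nu> j *\<^sub>R p j) \<bullet> x - ln Z"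
    by (simp add: sum_subtractf inner_sum_left \<nu>_sum flip: sum_distrib_right)
  finally show "- rel_entropy T \<nu> w = ln Z - (\<Sum>j\<in>T. \<nu> j *\<^sub>R p j) \<bullet> x" by simp
qed

lemma rel_entropy_rescaled:
  assumes "\<And>j. j \<in> T \<Longrightarrow> 0 < \<nu> j" "\<And>j. j \<in> T \<Longrightarrow> 0 < r j" "\<And>j. j \<in> T \<Longrightarrow> 0 < w j"
  shows "- rel_entropy T \<nu> (\<lambda>j. \<nu> j / r j * w j) = (\<Sum>j\<in>T. \<nu> j * (ln (w j) - ln (r j)))"
  unfolding rel_entropy_def sum_negf[symmetric]
proof (rule sum.cong)
  fix j assume "j \<in> T"
  then show "- (\<nu> j * ln (\<nu> j) - \<nu> j * ln (\<nu> j / r j * w j)) = \<nu> j * (ln (w j) - ln (r j))"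
    using assms[of j] by (simp add: ln_mult ln_div algebra_simps)
qed simp

lemma rel_entropy_rescaled_midpoint:
  assumes \<nu>: "\<forall>j\<in>T. 0 < \<nu> j" "sum \<nu> T = 1" and w: "\<forall>j\<in>T. 0 < w j"
    and \<nu>12: "\<forall>j\<in>T. 0 < \<nu>1 j" "\<forall>j\<in>T. 0 < \<nu>2 j" "\<forall>j\<in>T. \<nu>1 j + \<nu>2 j = 2 * \<nu> j"
  shows "- rel_entropy T \<nu>1 (\<lambda>j. \<nu>1 j / (2 * \<nu> j) * w j) + - rel_entropy T \<nu>2 (\<lambda>j. \<nu>2 j / (2 * \<nu> j) * w j)
         = 2 * (- rel_entropy T \<nu> w - ln 2)"
proof -
  have "- rel_entropy T \<nu>1 (\<lambda>j. \<nu>1 j / (2 * \<nu> j) * w j) + - rel_entropy T \<nu>2 (\<lambda>j. \<nu>2 j / (2 * \<nu> j) * w j)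
      = (\<Sum>j\<in>T. (\<nu>1 j + \<nu>2 j) * (ln (w j) - ln (2 * \<nu> j)))"
  proof -
    have "- rel_entropy T \<nu>1 (\<lambda>j. \<nu>1 j / (2 * \<nu> j) * w j) = (\<Sum>j\<in>T. \<nu>1 j * (ln (w j) - ln (2 * \<nu> j)))"
      "- rel_entropy T \<nu>2 (\<lambda>j. \<nu>2 j / (2 * \<nu> j) * w j) = (\<Sum>j\<in>T. \<nu>2 j * (ln (w j) - ln (2 * \<nu> j)))"
      by (rule rel_entropy_rescaled; use \<nu>(1) w \<nu>12(1,2) in simp)+
    then show ?thesis by (simp add: distrib_right sum.distrib)
  qed
  also have "\<dots> = (\<Sum>j\<in>T. 2 * (\<nu> j * ln (w j) - \<nu> j * ln (\<nu> j)) - 2 * ln 2 * \<nu> j)"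
  proof (rule sum.cong)
    fix j assume "j \<in> T"
    then show "(\<nu>1 j + \<nu>2 j) * (ln (w j) - ln (2 * \<nu> j))
        = 2 * (\<nu> j * ln (w j) - \<nu> j * ln (\<nu> j)) - 2 * ln 2 * \<nu> j"
      using \<nu>(1) \<nu>12(3) by (simp add: ln_mult algebra_simps)
  qed simp
  also have "\<dots> = 2 * (- rel_entropy T \<nu> w - ln 2)"
    using \<nu>(2) by (simp add: rel_entropy_def sum_subtractf flip: sum_distrib_left)
  finally show ?thesis .
qed

lemma two_exp_mean_le: "2 * exp ((a + b) / 2) \<le> exp a + exp (b::real)"
proof -
  define u v where "u = exp (a / 2)" and "v = exp (b / 2)"
  have "exp a = u * u" "exp b = v * v" "exp ((a + b) / 2) = u * v"
    by (simp_all add: u_def v_def add_divide_distrib flip: exp_add)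
  moreover have "0 \<le> (u - v) * (u - v)" by simp
  ultimately show ?thesis by (simp add: algebra_simps)
qed

lemma exists_convex_split_exp:
  fixes \<beta> L1 L2 :: real
  assumes "\<beta> \<le> 2 * exp ((L1 + L2) / 2)"
  shows "\<exists>\<theta>1 \<theta>2. 0 \<le> \<theta>1 \<and> 0 \<le> \<theta>2 \<and> \<theta>1 + \<theta>2 = 1 \<and> \<theta>1 * \<beta> \<le> exp L1 \<and> \<theta>2 * \<beta> \<le> exp L2"
proof -
  define S where "S = exp L1 + exp L2"
  have S: "0 < S" "\<beta> / S \<le> 1" using assms two_exp_mean_le[of L1 L2] by (simp_all add: S_def add_pos_pos)
  have "exp L / S * \<beta> \<le> exp L" for L
    using mult_left_mono[OF S(2), of "exp L"] by simp
  moreover have "exp L1 / S + exp L2 / S = 1" using S(1) by (simp add: S_def add_divide_distrib[symmetric])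
  ultimately show ?thesis using S(1) by (intro exI[of _ "exp L1 / S"] exI[of _ "exp L2 / S"]) auto
qed

lemma exists_convex_split_rel_entropy:
  assumes "\<forall>j\<in>T. 0 < \<nu> j" "sum \<nu> T = 1" "\<forall>j\<in>T. 0 < w j"
    and "\<forall>j\<in>T. 0 < \<nu>1 j" "\<forall>j\<in>T. 0 < \<nu>2 j" "\<forall>j\<in>T. \<nu>1 j + \<nu>2 j = 2 * \<nu> j"
    and "\<beta> \<le> exp (- rel_entropy T \<nu> w)"
  shows "\<exists>\<theta>1 \<theta>2. 0 \<le> \<theta>1 \<and> 0 \<le> \<theta>2 \<and> \<theta>1 + \<theta>2 = 1
    \<and> \<theta>1 * \<beta> \<le> exp (- rel_entropy T \<nu>1 (\<lambda>j. \<nu>1 j / (2 * \<nu> j) * w j))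
    \<and> \<theta>2 * \<beta> \<le> exp (- rel_entropy T \<nu>2 (\<lambda>j. \<nu>2 j / (2 * \<nu> j) * w j))"
proof (rule exists_convex_split_exp)
  have "- rel_entropy T \<nu>1 (\<lambda>j. \<nu>1 j / (2 * \<nu> j) * w j) + - rel_entropy T \<nu>2 (\<lambda>j. \<nu>2 j / (2 * \<nu> j) * w j)
      = 2 * (- rel_entropy T \<nu> w - ln 2)"
    using assms(1-6) by (rule rel_entropy_rescaled_midpoint)
  then have mean: "(- rel_entropy T \<nu>1 (\<lambda>j. \<nu>1 j / (2 * \<nu> j) * w j)
      + - rel_entropy T \<nu>2 (\<lambda>j. \<nu>2 j / (2 * \<nu> j) * w j)) / 2 = - rel_entropy T \<nu> w - ln 2"
    by simp
  show "\<beta> \<le> 2 * exp ((- rel_entropy T \<nu>1 (\<lambda>j. \<nu>1 j / (2 * \<nu> j) * w j)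
      + - rel_entropy T \<nu>2 (\<lambda>j. \<nu>2 j / (2 * \<nu> j) * w j)) / 2)"
    using assms(7) by (simp only: mean) (simp add: exp_diff)
qed

section \<open>Dual certificates for nonnegative exponential sums\<close>

lemma exists_minimizer_plus_sq:
  fixes g :: "'a::euclidean_space \<Rightarrow> real"
  assumes "continuous_on UNIV g" "\<And>x. 0 \<le> g x" "0 < \<epsilon>"
  shows "\<exists>x0. \<forall>y. g x0 + \<epsilon> * (x0 \<bullet> x0) \<le> g y + \<epsilon> * (y \<bullet> y)"
proof -
  define F where "F x = g x + \<epsilon> * (x \<bullet> x)" for x
  define r where "r = sqrt (g 0 / \<epsilon>)"
  have r: "0 \<le> r" "r\<^sup>2 = g 0 / \<epsilon>" using assms(2,3) by (simp_all add: r_def)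
  have "continuous_on (cball 0 r) F"
    unfolding F_def by (intro continuous_intros continuous_on_subset[OF assms(1)]) auto
  then obtain x0 where x0: "\<forall>y\<in>cball 0 r. F x0 \<le> F y"
    using continuous_attains_inf[OF compact_cball] r(1) by (metis cball_eq_empty not_less)
  have "F x0 \<le> F y" for y
  proof (cases "y \<in> cball 0 r")
    case False
    then have "r\<^sup>2 < (norm y)\<^sup>2" using r(1) by (simp add: power_strict_mono)
    then have "g 0 < \<epsilon> * (y \<bullet> y)" using r(2) assms(3) by (simp add: power2_norm_eq_inner field_simps)
    then have "F 0 < F y" using assms(2)[of y] by (simp add: F_def)
    moreover have "F x0 \<le> F 0" using x0 r(1) by simp
    ultimately show ?thesis by linarith
  qed (use x0 in auto)
  then show ?thesis by (auto simp: F_def)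
qed

lemma sum_exp_plus_sq_stationary:
  fixes p :: "'i \<Rightarrow> 'a::real_inner"
  assumes "\<And>y. (\<Sum>j\<in>T. w j * exp (p j \<bullet> x0)) + \<epsilon> * (x0 \<bullet> x0)
                 \<le> (\<Sum>j\<in>T. w j * exp (p j \<bullet> y)) + \<epsilon> * (y \<bullet> y)"
  shows "(\<Sum>j\<in>T. (w j * exp (p j \<bullet> x0)) *\<^sub>R p j) + (2 * \<epsilon>) *\<^sub>R x0 = 0"
proof -
  define G where "G = (\<Sum>j\<in>T. (w j * exp (p j \<bullet> x0)) *\<^sub>R p j) + (2 * \<epsilon>) *\<^sub>R x0"
  have "((\<lambda>y. (\<Sum>j\<in>T. w j * exp (p j \<bullet> y)) + \<epsilon> * (y \<bullet> y)) has_derivative (\<lambda>h. G \<bullet> h)) (at x0)"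
    unfolding G_def
    by (auto intro!: derivative_eq_intros ext
        simp: inner_add_left inner_sum_left inner_commute[of h x0 for h] algebra_simps)
  then have "(\<lambda>h. G \<bullet> h) = (\<lambda>h. 0)"
    by (rule has_derivative_local_min) (use assms in auto)
  then have "G \<bullet> G = 0" by metis
  then show ?thesis by (simp add: G_def)
qed

lemma exists_penalized_stationary_point:
  fixes p :: "'i \<Rightarrow> 'a::euclidean_space"
  assumes "\<And>j. j \<in> T \<Longrightarrow> 0 \<le> w j" "0 < \<epsilon>"
  shows "\<exists>x0. (\<Sum>j\<in>T. (w j * exp (p j \<bullet> x0)) *\<^sub>R p j) + (2 * \<epsilon>) *\<^sub>R x0 = 0
           \<and> (\<Sum>j\<in>T. w j * exp (p j \<bullet> x0)) + \<epsilon> * (x0 \<bullet> x0) \<le> sum w T"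
proof -
  have "continuous_on UNIV (\<lambda>x. \<Sum>j\<in>T. w j * exp (p j \<bullet> x))" by (intro continuous_intros)
  moreover have "0 \<le> (\<Sum>j\<in>T. w j * exp (p j \<bullet> x))" for x using assms(1) by (intro sum_nonneg) auto
  ultimately obtain x0 where min: "\<forall>y. (\<Sum>j\<in>T. w j * exp (p j \<bullet> x0)) + \<epsilon> * (x0 \<bullet> x0)
      \<le> (\<Sum>j\<in>T. w j * exp (p j \<bullet> y)) + \<epsilon> * (y \<bullet> y)"
    using exists_minimizer_plus_sq[where g = "\<lambda>x. \<Sum>j\<in>T. w j * exp (p j \<bullet> x)"] assms(2) by blast
  then show ?thesis using sum_exp_plus_sq_stationary[OF min[rule_format]] spec[OF min, of 0] by auto
qed

text \<open>The penalty \<open>\<epsilon> * (x \<bullet> x)\<close> makes the exponential sum attain its infimum; at the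
  minimiser the Gibbs weights have barycentre \<open>-(2 * \<epsilon> / g x0) *\<^sub>R x0\<close>, which is small for
  the chosen \<open>\<epsilon>\<close>.\<close>
lemma approx_entropy_certificate:
  fixes p :: "'i \<Rightarrow> 'a::euclidean_space"
  assumes T: "finite T" and \<beta>: "0 < \<beta>" and w: "\<And>j. j \<in> T \<Longrightarrow> 0 < w j"
    and bound: "\<And>x. \<beta> \<le> (\<Sum>j\<in>T. w j * exp (p j \<bullet> x))" and \<delta>: "0 < \<delta>"
  shows "\<exists>\<nu>. (\<forall>j\<in>T. 0 < \<nu> j) \<and> sum \<nu> T = 1 \<and> norm (\<Sum>j\<in>T. \<nu> j *\<^sub>R p j) \<le> \<delta>
           \<and> ln \<beta> \<le> - rel_entropy T \<nu> w"
proof -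
  define g where "g x = (\<Sum>j\<in>T. w j * exp (p j \<bullet> x))" for x
  define \<epsilon> where "\<epsilon> = \<delta>\<^sup>2 * \<beta>\<^sup>2 / (4 * g 0)"
  have g: "\<beta> \<le> g x" for x using bound by (simp add: g_def)
  have \<epsilon>: "0 < \<epsilon>" using \<beta> \<delta> g[of 0] by (simp add: \<epsilon>_def)
  have ne: "T \<noteq> {}" using g[of 0] \<beta> by (auto simp: g_def)
  obtain x0 where stat: "(\<Sum>j\<in>T. (w j * exp (p j \<bullet> x0)) *\<^sub>R p j) + (2 * \<epsilon>) *\<^sub>R x0 = 0"
    and min: "g x0 + \<epsilon> * (x0 \<bullet> x0) \<le> g 0"
    using exists_penalized_stationary_point[where T = T and w = w and \<epsilon> = \<epsilon> and p = p] w \<epsilon> by (force simp: g_def)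
  define \<nu> where "\<nu> = (\<lambda>j. w j * exp (p j \<bullet> x0) / g x0)"
  have gibbs: "\<forall>j\<in>T. 0 < \<nu> j" "sum \<nu> T = 1" "- rel_entropy T \<nu> w = ln (g x0) - (\<Sum>j\<in>T. \<nu> j *\<^sub>R p j) \<bullet> x0"
    using rel_entropy_gibbs_weights[where T = T and w = w and p = p and x = x0, OF T ne w] by (simp_all add: \<nu>_def g_def)
  have gx0: "0 < g x0" using g[of x0] \<beta> by simp
  have bary: "(\<Sum>j\<in>T. \<nu> j *\<^sub>R p j) = - (2 * \<epsilon> / g x0) *\<^sub>R x0"
  proof -
    have "(\<Sum>j\<in>T. \<nu> j *\<^sub>R p j) = (1 / g x0) *\<^sub>R (\<Sum>j\<in>T. (w j * exp (p j \<bullet> x0)) *\<^sub>R p j)"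
      by (simp add: \<nu>_def scaleR_sum_right divide_inverse mult.commute)
    moreover have "(\<Sum>j\<in>T. (w j * exp (p j \<bullet> x0)) *\<^sub>R p j) = - ((2 * \<epsilon>) *\<^sub>R x0)"
      using stat by (simp add: eq_neg_iff_add_eq_0)
    ultimately show ?thesis by simp
  qed
  have "\<epsilon> * (x0 \<bullet> x0) \<le> g 0" using min g[of x0] \<beta> by simp
  have "(norm (\<Sum>j\<in>T. \<nu> j *\<^sub>R p j))\<^sup>2 = 4 * \<epsilon> * (\<epsilon> * (x0 \<bullet> x0)) / (g x0)\<^sup>2"
    by (simp add: bary power2_norm_eq_inner[symmetric] power_mult_distrib power_divide power2_eq_square)
  also have "\<dots> \<le> 4 * \<epsilon> * g 0 / (g x0)\<^sup>2"
    using \<open>\<epsilon> * (x0 \<bullet> x0) \<le> g 0\<close> \<epsilon> by (intro divide_right_mono mult_left_mono) auto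
  also have "\<dots> \<le> 4 * \<epsilon> * g 0 / \<beta>\<^sup>2"
    using gx0 g[of x0] g[of 0] \<beta> \<epsilon> by (intro divide_left_mono mult_pos_pos power_mono) auto
  also have "\<dots> = \<delta>\<^sup>2" using \<beta> g[of 0] by (simp add: \<epsilon>_def)
  finally have "norm (\<Sum>j\<in>T. \<nu> j *\<^sub>R p j) \<le> \<delta>" using \<delta> by (simp add: power2_le_iff_abs_le)
  moreover have "ln \<beta> \<le> - rel_entropy T \<nu> w"
  proof -
    have "ln \<beta> \<le> ln (g x0)" using g[of x0] \<beta> by simp
    also have "\<dots> \<le> ln (g x0) + 2 * \<epsilon> / g x0 * (x0 \<bullet> x0)" using \<epsilon> gx0 by simp
    also have "\<dots> = - rel_entropy T \<nu> w" using gibbs(3) by (simp add: bary)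
    finally show ?thesis .
  qed
  ultimately show ?thesis using gibbs(1,2) by blast
qed

lemma compact_rel_entropy_sublevel_simplex:
  "compact ({v::real^'i. (\<forall>j. 0 \<le> v $ j \<and> v $ j \<le> 1) \<and> (\<Sum>j\<in>T. v $ j) = 1}
     \<inter> (\<lambda>v. rel_entropy T (\<lambda>j. v $ j) w) -` {..b})" (is "compact (?S \<inter> _)")
proof -
  have "closed ?S"
    by (intro closed_Collect_conj closed_Collect_all closed_Collect_le closed_Collect_eq continuous_intros)
  moreover have "continuous_on ?S (\<lambda>v. rel_entropy T (\<lambda>j. v $ j) w)"
    by (rule continuous_on_subset[OF continuous_on_rel_entropy]) auto
  ultimately have "closed (?S \<inter> (\<lambda>v. rel_entropy T (\<lambda>j. v $ j) w) -` {..b})"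
    by (intro continuous_closed_preimage) auto
  moreover have "?S \<subseteq> cbox 0 1" by (auto simp: mem_box_cart)
  ultimately show ?thesis by (meson bounded_cbox bounded_subset compact_eq_bounded_closed inf.coboundedI1)
qed

text \<open>The barycentre norm attains its infimum on the compact set of weights obeying the entropy
  bound, and by the approximate certificates this infimum is 0.\<close>
lemma exists_entropy_certificate:
  fixes T :: "'i::finite set" and p :: "'i \<Rightarrow> 'a::euclidean_space"
  assumes \<beta>: "0 < \<beta>" and w: "\<And>j. j \<in> T \<Longrightarrow> 0 < w j"
    and bound: "\<And>x. \<beta> \<le> (\<Sum>j\<in>T. w j * exp (p j \<bullet> x))"
  shows "\<exists>\<nu>. (\<forall>j\<in>T. 0 \<le> \<nu> j) \<and> sum \<nu> T = 1 \<and> (\<Sum>j\<in>T. \<nu> j *\<^sub>R p j) = 0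
           \<and> ln \<beta> \<le> - rel_entropy T \<nu> w"
proof -
  define S where "S = {v::real^'i. (\<forall>j. 0 \<le> v $ j \<and> v $ j \<le> 1) \<and> (\<Sum>j\<in>T. v $ j) = 1}"
  define K where "K = S \<inter> (\<lambda>v. rel_entropy T (\<lambda>j. v $ j) w) -` {..- ln \<beta>}"
  define bary where "bary v = norm (\<Sum>j\<in>T. v $ j *\<^sub>R p j)" for v
  have "compact K" unfolding K_def S_def by (rule compact_rel_entropy_sublevel_simplex)
  have approx: "\<exists>v\<in>K. bary v \<le> \<delta>" if \<delta>: "0 < \<delta>" for \<delta>
  proof -
    obtain \<nu> where \<nu>: "\<forall>j\<in>T. 0 < \<nu> j" "sum \<nu> T = 1" "norm (\<Sum>j\<in>T. \<nu> j *\<^sub>R p j) \<le> \<delta>"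
      "ln \<beta> \<le> - rel_entropy T \<nu> w"
      using approx_entropy_certificate[OF _ \<beta> w bound \<delta>] by auto
    define v where "v = (\<chi> j. if j \<in> T then \<nu> j else 0)"
    have "\<nu> j \<le> 1" if "j \<in> T" for j
      using member_le_sum[of j T \<nu>] \<nu>(1,2) that by (auto intro: less_imp_le)
    then have "v \<in> S"
      using \<nu>(1,2) by (auto simp: S_def v_def less_eq_real_def cong: sum.cong)
    moreover have "rel_entropy T (\<lambda>j. v $ j) w \<le> - ln \<beta>"
      using \<nu>(4) by (simp add: rel_entropy_def v_def cong: sum.cong)
    ultimately have "v \<in> K" by (simp add: K_def)
    moreover have "bary v \<le> \<delta>" using \<nu>(3) by (simp add: bary_def v_def)
    ultimately show ?thesis by blast
  qed
  have "K \<noteq> {}" using approx[of 1] by auto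
  moreover have "continuous_on K bary" unfolding bary_def by (intro continuous_intros)
  ultimately obtain v0 where v0: "v0 \<in> K" "\<And>v. v \<in> K \<Longrightarrow> bary v0 \<le> bary v"
    using continuous_attains_inf[OF \<open>compact K\<close>] by metis
  have "bary v0 = 0"
  proof (rule ccontr)
    assume "bary v0 \<noteq> 0"
    then have "0 < bary v0" by (simp add: bary_def)
    then obtain v where "v \<in> K" "bary v \<le> bary v0 / 2" using approx[of "bary v0 / 2"] by auto
    then show False using v0(2)[of v] \<open>0 < bary v0\<close> by simp
  qed
  then show ?thesis using v0(1) by (auto simp: bary_def K_def S_def)
qed

lemma Sig_add: "Sig A (u + v) x = Sig A u x + Sig A v x"
  by (simp add: Sig_def sum.distrib distrib_right)

lemma Sig_scaleR: "Sig A (s *\<^sub>R u) x = s * Sig A u x"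
  by (simp add: Sig_def sum_distrib_left mult.assoc)

lemma C_AGE_scaleR: "u \<in> C_AGE A k \<Longrightarrow> 0 \<le> s \<Longrightarrow> s *\<^sub>R u \<in> C_AGE A k"
  by (auto simp: C_AGE_def C_NNS_def Sig_scaleR)

lemma nonneg_in_C_AGE: "(\<And>i. 0 \<le> u $ i) \<Longrightarrow> u \<in> C_AGE A k"
  by (auto simp: C_AGE_def C_NNS_def Sig_def intro!: sum_nonneg)

lemma sum_in_C_SAGE:
  assumes "\<And>k. k \<in> K \<Longrightarrow> f k \<in> C_AGE A k"
  shows "(\<Sum>k\<in>K. f k) \<in> C_SAGE A"
proof -
  define g where "g k = (if k \<in> K then f k else 0)" for k
  have "g k \<in> C_AGE A k" for k
    using assms nonneg_in_C_AGE[of 0 A k] by (simp add: g_def)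
  moreover have "(\<Sum>k\<in>K. f k) = (\<Sum>k\<in>UNIV. g k)"
    by (simp add: g_def sum.If_cases)
  ultimately show ?thesis by (auto simp: C_SAGE_def)
qed

lemma C_AGE_subset_C_SAGE: "C_AGE A k \<subseteq> C_SAGE A"
  using sum_in_C_SAGE[of "{k}" "\<lambda>_. _" A] by auto

lemma C_POLY_SAGE_if_sig_rep_in_C_AGE: "sig_rep A c \<in> C_AGE A k \<Longrightarrow> c \<in> C_POLY_SAGE A"
  using C_AGE_subset_C_SAGE by (auto simp: C_POLY_SAGE_def)

lemma sig_rep_nth: "sig_rep A c $ i = (if even_col A i then c $ i else - \<bar>c $ i\<bar>)"
  by (simp add: sig_rep_def)

lemma sig_rep_scaleR: "0 \<le> s \<Longrightarrow> sig_rep A (s *\<^sub>R c) = s *\<^sub>R sig_rep A c"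
  by (auto simp: vec_eq_iff sig_rep_nth abs_mult)

lemma sig_rep_eq_0_iff: "sig_rep A c $ i = 0 \<longleftrightarrow> c $ i = 0"
  by (simp add: sig_rep_nth)

definition restrict_coords :: "('m \<Rightarrow> bool) \<Rightarrow> real^'m \<Rightarrow> real^'m" where
  "restrict_coords P c = (\<chi> i. if P i then c $ i else 0)"

lemma sig_rep_restrict_coords: "sig_rep A (restrict_coords P c) = restrict_coords P (sig_rep A c)"
  by (auto simp: vec_eq_iff restrict_coords_def sig_rep_nth)

lemma restrict_coords_add_compl: "restrict_coords P c + restrict_coords (\<lambda>i. \<not> P i) c = c"
  by (auto simp: vec_eq_iff restrict_coords_def)

lemma C_AGE_entropy_certificate:
  fixes A :: "nat^'m::finite^'n::finite"
  assumes "k \<notin> R" "\<And>j. j \<noteq> k \<Longrightarrow> 0 \<le> v $ j" "\<And>j. j \<in> R \<Longrightarrow> 0 < v $ j"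
    and "\<And>j. j \<in> R \<Longrightarrow> 0 < \<nu> j" "sum \<nu> R = 1" "(\<Sum>j\<in>R. \<nu> j *\<^sub>R acol A j) = acol A k"
    and "- v $ k \<le> exp (- rel_entropy R \<nu> (\<lambda>j. v $ j))"
  shows "v \<in> C_AGE A k"
proof -
  have "0 \<le> Sig A v x" for x
  proof -
    have "- v $ k * exp (acol A k \<bullet> x) \<le> exp (- rel_entropy R \<nu> (\<lambda>j. v $ j)) * exp (acol A k \<bullet> x)"
      using assms(7) by (intro mult_right_mono) auto
    also have "\<dots> \<le> (\<Sum>j\<in>R. v $ j * exp (acol A j \<bullet> x))"
      using exp_rel_entropy_le_sum_exp[where w = "\<lambda>j. v $ j" and p = "acol A" and x = x, OF finite assms(4,3,5)] assms(6)
      by (simp add: exp_add[symmetric])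
    also have "\<dots> \<le> (\<Sum>j\<in>UNIV - {k}. v $ j * exp (acol A j \<bullet> x))"
      using assms(1,2) by (intro sum_mono2) auto
    finally show ?thesis by (simp add: Sig_def sum.remove[of UNIV k])
  qed
  then show ?thesis using assms(2) by (auto simp: C_AGE_def C_NNS_def)
qed

section \<open>Normal form of SAGE decompositions\<close>

lemma absorbing_weights:
  fixes r :: "'k \<Rightarrow> real"
  assumes "finite K" "\<And>k. k \<in> K \<Longrightarrow> 0 \<le> r k" "a + sum r K \<le> 0"
  shows "\<exists>t. (\<forall>k\<in>K. 0 \<le> t k \<and> r k + t k * a = 0) \<and> sum t K \<le> 1"
proof (cases "a = 0")
  case True
  then have "\<forall>k\<in>K. r k = 0"
    using assms sum_nonneg[of K r] sum_nonneg_eq_0_iff[of K r] by auto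
  then show ?thesis by (intro exI[of _ "\<lambda>_. 0"]) auto
next
  case False
  then have a: "a < 0" using assms(3) sum_nonneg[of K r] assms(2) by fastforce
  have "sum (\<lambda>k. r k / - a) K = sum r K / - a" by (simp add: sum_divide_distrib sum_negf)
  also have "\<dots> \<le> 1" using a assms(3) by (simp add: le_divide_eq)
  finally show ?thesis using a assms(2) by (intro exI[of _ "\<lambda>k. r k / - a"]) (auto simp: divide_nonneg_neg)
qed

text \<open>Only the summand \<open>f i\<close> may be negative at coordinate \<open>i\<close>, so adding multiples of it
  to the other summands cancels their \<open>i\<close>-th coordinates.\<close>
lemma C_AGE_decomposition_clear_coordinate:
  fixes f :: "'m::finite \<Rightarrow> real^'m"
  assumes f: "\<And>k. f k \<in> C_AGE A k" and d: "(\<Sum>k\<in>UNIV. f k) $ i \<le> 0"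
  shows "\<exists>f'. (\<forall>k. f' k \<in> C_AGE A k) \<and> (\<Sum>k\<in>UNIV. f' k) = (\<Sum>k\<in>UNIV. f k)
           \<and> (\<forall>k. k \<noteq> i \<longrightarrow> f' k $ i = 0) \<and> (\<forall>k j. f k $ j = 0 \<longrightarrow> f i $ j = 0 \<longrightarrow> f' k $ j = 0)"
proof -
  have nonneg: "0 \<le> f k $ j" if "j \<noteq> k" for k j using f[of k] that by (auto simp: C_AGE_def)
  have "f i $ i + (\<Sum>k\<in>UNIV - {i}. f k $ i) \<le> 0"
    using d by (simp add: sum_component sum.remove[of UNIV i])
  then obtain t where t_UNIV: "\<forall>k\<in>UNIV - {i}. 0 \<le> t k \<and> f k $ i + t k * f i $ i = 0"
    and s: "sum t (UNIV - {i}) \<le> 1"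
    using absorbing_weights[of "UNIV - {i}" "\<lambda>k. f k $ i" "f i $ i"] nonneg by auto
  have t: "0 \<le> t k \<and> f k $ i + t k * f i $ i = 0" if "k \<noteq> i" for k using t_UNIV that by blast
  define s where "s = sum t (UNIV - {i})"
  define f' where "f' k = (if k = i then (1 - s) *\<^sub>R f i else f k + t k *\<^sub>R f i)" for k
  have "f' k \<in> C_AGE A k" for k
  proof (cases "k = i")
    case True
    then show ?thesis using C_AGE_scaleR[OF f] s by (simp add: f'_def s_def)
  next
    case False
    then have "f k + t k *\<^sub>R f i \<in> C_NNS A"
      using f[of k] f[of i] t[of k] by (auto simp: C_AGE_def C_NNS_def Sig_add Sig_scaleR)
    moreover have "0 \<le> (f k + t k *\<^sub>R f i) $ j" if "j \<noteq> k" for j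
      using t[of k] False nonneg[of j k] nonneg[of j i] that
      by (cases "j = i") (auto simp: mult.commute)
    ultimately show ?thesis using False by (simp add: C_AGE_def f'_def)
  qed
  moreover have "(\<Sum>k\<in>UNIV. f' k) = (\<Sum>k\<in>UNIV. f k)"
  proof -
    have "(\<Sum>k\<in>UNIV - {i}. f' k) = (\<Sum>k\<in>UNIV - {i}. f k) + s *\<^sub>R f i"
      by (simp add: f'_def s_def sum.distrib scaleR_sum_left)
    then show ?thesis by (simp add: sum.remove[of UNIV i] f'_def algebra_simps)
  qed
  moreover have "\<forall>k. k \<noteq> i \<longrightarrow> f' k $ i = 0" using t by (simp add: f'_def mult.commute)
  moreover have "\<forall>k j. f k $ j = 0 \<longrightarrow> f i $ j = 0 \<longrightarrow> f' k $ j = 0" by (simp add: f'_def)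
  ultimately show ?thesis by blast
qed

lemma C_SAGE_normal_decomposition:
  fixes d :: "real^'m::finite"
  assumes "d \<in> C_SAGE A"
  shows "\<exists>f. (\<forall>k. f k \<in> C_AGE A k) \<and> (\<Sum>k\<in>UNIV. f k) = d
           \<and> (\<forall>i k. d $ i \<le> 0 \<longrightarrow> k \<noteq> i \<longrightarrow> f k $ i = 0)"
proof -
  have "\<exists>f. (\<forall>k. f k \<in> C_AGE A k) \<and> (\<Sum>k\<in>UNIV. f k) = d \<and> (\<forall>i\<in>M. \<forall>k. k \<noteq> i \<longrightarrow> f k $ i = 0)"
    if "M \<subseteq> {i. d $ i \<le> 0}" for M
    using finite[of M] that
  proof (induction M rule: finite_induct)
    case empty
    then show ?case using assms by (auto simp: C_SAGE_def)
  next
    case (insert i M)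
    then obtain f where f: "\<forall>k. f k \<in> C_AGE A k" "(\<Sum>k\<in>UNIV. f k) = d"
      and zero: "\<forall>j\<in>M. \<forall>k. k \<noteq> j \<longrightarrow> f k $ j = 0" by auto
    obtain f' where f': "\<forall>k. f' k \<in> C_AGE A k" "(\<Sum>k\<in>UNIV. f' k) = d"
      "\<forall>k. k \<noteq> i \<longrightarrow> f' k $ i = 0" "\<forall>k j. f k $ j = 0 \<longrightarrow> f i $ j = 0 \<longrightarrow> f' k $ j = 0"
      using C_AGE_decomposition_clear_coordinate[of f A i] f insert.prems by auto
    have "\<forall>j\<in>insert i M. \<forall>k. k \<noteq> j \<longrightarrow> f' k $ j = 0"
      using f'(3,4) zero insert.hyps(2) by (metis insert_iff)
    then show ?case using f'(1,2) by blast
  qed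
  from this[of "{i. d $ i \<le> 0}"] show ?thesis by auto
qed

section \<open>Extreme rays\<close>

lemma extreme_ray_gen_split:
  "extreme_ray_gen C c \<Longrightarrow> x \<in> C \<Longrightarrow> c - x \<in> C \<Longrightarrow> \<exists>s\<ge>0. x = s *\<^sub>R c"
  unfolding extreme_ray_gen_def by (metis add_diff_cancel_left' diff_add_cancel)

lemma extreme_ray_gen_restrict_coords:
  fixes c :: "real^'m"
  assumes ext: "extreme_ray_gen C c"
    and "restrict_coords P c \<in> C" "restrict_coords (\<lambda>i. \<not> P i) c \<in> C"
    and "P i" "c $ i \<noteq> 0" "c $ j \<noteq> 0"
  shows "P j"
proof (rule ccontr)
  assume "\<not> P j"
  have "c - restrict_coords P c = restrict_coords (\<lambda>i. \<not> P i) c"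
    using restrict_coords_add_compl[of P c] by (simp add: algebra_simps)
  then obtain s where s: "restrict_coords P c = s *\<^sub>R c"
    using extreme_ray_gen_split[OF ext assms(2)] assms(3) by auto
  have "restrict_coords P c $ j = s * c $ j" "restrict_coords P c $ i = s * c $ i" by (simp_all add: s)
  then have "s = 0" "c $ i = s * c $ i"
    using \<open>\<not> P j\<close> assms(4,6) by (simp_all add: restrict_coords_def)
  then show False using assms(5) by simp
qed

text \<open>Odd coordinates of the signomial representative are nonpositive, so in a normal SAGE
  decomposition each is carried by a single summand, where it can take its sign from \<open>c\<close>.\<close>
lemma C_POLY_SAGE_AGE_lifts:
  fixes A :: "nat^'m::finite^'n::finite"
  assumes "c \<in> C_POLY_SAGE A"
  shows "\<exists>u. (\<forall>k. sig_rep A (u k) \<in> C_AGE A k \<and> c - u k \<in> C_POLY_SAGE A) \<and> (\<Sum>k\<in>UNIV. u k) = c"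
proof -
  define d where "d = sig_rep A c"
  have "d \<in> C_SAGE A" using assms by (simp add: C_POLY_SAGE_def d_def)
  then obtain f where f: "\<forall>k. f k \<in> C_AGE A k" "(\<Sum>k\<in>UNIV. f k) = d"
    and normal: "\<forall>i k. d $ i \<le> 0 \<longrightarrow> k \<noteq> i \<longrightarrow> f k $ i = 0"
    using C_SAGE_normal_decomposition[of d A] by auto
  have d_odd: "d $ j = - \<bar>c $ j\<bar>" if "\<not> even_col A j" for j
    using that by (simp add: d_def sig_rep_nth)
  have f_odd: "f k $ j = 0" if "\<not> even_col A j" "k \<noteq> j" for j k
    using normal d_odd[OF that(1)] that(2) by simp
  have sum_f: "(\<Sum>k\<in>UNIV. f k $ j) = d $ j" for j
    using arg_cong[OF f(2), of "\<lambda>v. v $ j"] by (simp add: sum_component)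
  have f_own: "f j $ j = d $ j" if "\<not> even_col A j" for j
    using sum_f[of j] f_odd[OF that] by (simp add: sum.remove[of UNIV j])
  define u where "u k = (\<chi> j. if even_col A j then f k $ j else if k = j then c $ j else 0)" for k
  have "sig_rep A (u k) = f k" for k
    using f_odd f_own d_odd by (auto simp: vec_eq_iff u_def sig_rep_nth)
  moreover have "sig_rep A (c - u k) = (\<Sum>k'\<in>UNIV - {k}. f k')" for k
  proof -
    have "sig_rep A (c - u k) = d - f k"
      using f_odd f_own d_odd by (auto simp: vec_eq_iff u_def sig_rep_nth d_def)
    moreover have "d = f k + (\<Sum>k'\<in>UNIV - {k}. f k')" using f(2) by (simp add: sum.remove[of UNIV k])
    ultimately show ?thesis by simp
  qed
  moreover have "(\<Sum>k\<in>UNIV. u k) $ j = c $ j" for j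
    using sum_f[of j] by (cases "even_col A j") (simp_all add: u_def sum_component d_def sig_rep_nth)
  then have "(\<Sum>k\<in>UNIV. u k) = c" by (simp add: vec_eq_iff)
  moreover have "(\<Sum>k'\<in>UNIV - {k}. f k') \<in> C_SAGE A" for k using f(1) by (intro sum_in_C_SAGE) auto
  ultimately show ?thesis using f(1) by (intro exI[of _ u]) (auto simp: C_POLY_SAGE_def)
qed

lemma extreme_ray_sig_rep_in_C_AGE:
  fixes A :: "nat^'m::finite^'n::finite"
  assumes ext: "extreme_ray_gen (C_POLY_SAGE A) c"
  shows "\<exists>k. sig_rep A c \<in> C_AGE A k"
proof -
  have "c \<in> C_POLY_SAGE A" "c \<noteq> 0" using ext by (simp_all add: extreme_ray_gen_def)
  then obtain u where u: "\<And>k. sig_rep A (u k) \<in> C_AGE A k" "\<And>k. c - u k \<in> C_POLY_SAGE A"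
    and sum_u: "(\<Sum>k\<in>UNIV. u k) = c"
    using C_POLY_SAGE_AGE_lifts by blast
  obtain k where "u k \<noteq> 0" using sum_u \<open>c \<noteq> 0\<close> by (metis sum.neutral)
  moreover obtain s where "0 \<le> s" "u k = s *\<^sub>R c"
    using extreme_ray_gen_split[OF ext C_POLY_SAGE_if_sig_rep_in_C_AGE[OF u(1)] u(2)] by blast
  ultimately have "0 < s" "sig_rep A (u k) = s *\<^sub>R sig_rep A c" by (auto simp: sig_rep_scaleR)
  then have "sig_rep A c = (1 / s) *\<^sub>R sig_rep A (u k)" by simp
  then show ?thesis using C_AGE_scaleR[OF u(1), of "1 / s" k] \<open>0 < s\<close> by auto
qed

section \<open>Simplicial circuits\<close>

lemma affine_independent_exchange:
  fixes P :: "'a::euclidean_space set"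
  assumes P: "finite P" "\<not> affine_dependent P" and p0: "p0 \<in> P" "\<nu> p0 \<noteq> 0"
    and \<nu>: "sum \<nu> P = 1" "(\<Sum>p\<in>P. \<nu> p *\<^sub>R p) = z" and z: "z \<notin> P"
  shows "\<not> affine_dependent (insert z (P - {p0}))"
proof -
  define Q where "Q = insert z (P - {p0})"
  define \<mu> where "\<mu> q = (if q = z then 1 / \<nu> p0 else - \<nu> q / \<nu> p0)" for q
  have rest: "sum \<nu> (P - {p0}) = 1 - \<nu> p0" "(\<Sum>p\<in>P - {p0}. \<nu> p *\<^sub>R p) = z - \<nu> p0 *\<^sub>R p0"
    using \<nu> P(1) p0(1) by (simp_all add: sum.remove[of P p0] algebra_simps)
  have "(\<Sum>q\<in>P - {p0}. \<mu> q) = (\<Sum>q\<in>P - {p0}. - \<nu> q / \<nu> p0)"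
    using z by (intro sum.cong) (auto simp: \<mu>_def)
  also have "\<dots> = - sum \<nu> (P - {p0}) / \<nu> p0" by (simp add: sum_negf sum_divide_distrib)
  finally have "sum \<mu> Q = 1" using z P(1) p0(2) rest(1) by (simp add: Q_def \<mu>_def field_simps)
  have "(\<Sum>q\<in>P - {p0}. \<mu> q *\<^sub>R q) = (\<Sum>q\<in>P - {p0}. - (1 / \<nu> p0) *\<^sub>R (\<nu> q *\<^sub>R q))"
    using z by (intro sum.cong) (auto simp: \<mu>_def)
  also have "\<dots> = - (1 / \<nu> p0) *\<^sub>R (\<Sum>p\<in>P - {p0}. \<nu> p *\<^sub>R p)"
    by (simp add: scaleR_sum_right)
  finally have "(\<Sum>q\<in>Q. \<mu> q *\<^sub>R q) = p0"
    using z P(1) p0(2) rest(2) by (simp add: Q_def \<mu>_def algebra_simps)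
  with \<open>sum \<mu> Q = 1\<close> have "p0 \<in> affine hull Q"
    using P(1) by (auto simp: affine_hull_finite Q_def)
  then have "P \<subseteq> affine hull Q" by (auto simp: Q_def intro: hull_inc)
  then have "aff_dim P \<le> aff_dim Q" by (metis aff_dim_affine_hull aff_dim_subset)
  moreover have "aff_dim P = int (card P) - 1" using P affine_independent_iff_card by blast
  moreover have "card Q = card P" using P(1) p0(1) z card_gt_0_iff[of P] by (auto simp: Q_def)
  moreover have "aff_dim Q \<le> int (card Q) - 1" using P(1) by (intro aff_dim_le_card) (simp add: Q_def)
  ultimately show ?thesis
    using P(1) affine_independent_iff_card[of Q] by (simp add: Q_def)
qed

lemma simplicial_circuit_insert_convex_combination:
  fixes P :: "'a::euclidean_space set"
  assumes P: "finite P" "\<not> affine_dependent P" and z: "z \<notin> P"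
    and \<nu>: "\<forall>p\<in>P. 0 < \<nu> p" "sum \<nu> P = 1" "(\<Sum>p\<in>P. \<nu> p *\<^sub>R p) = z"
  shows "simplicial_circuit (insert z P)"
proof -
  have "(\<Sum>p\<in>P. \<nu> p *\<^sub>R p) \<in> convex hull P"
    using \<nu>(1) by (intro convex_sum[OF P(1) convex_convex_hull \<nu>(2)]) (auto intro: hull_inc less_imp_le)
  then have "z \<in> convex hull P" using \<nu>(3) by simp
  then have "z \<in> affine hull P" using convex_hull_subset_affine_hull by blast
  have "affine_dependent (insert z P)"
    unfolding affine_dependent_def using \<open>z \<in> affine hull P\<close> z by (intro bexI[of _ z]) auto
  moreover have "\<not> affine_dependent U" if U: "U \<subset> insert z P" for U
  proof (cases "z \<in> U")
    case False
    then show ?thesis using U P(2) affine_independent_subset by blast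
  next
    case True
    then obtain p0 where "p0 \<in> P" "U \<subseteq> insert z (P - {p0})" using U by blast
    then show ?thesis
      using affine_independent_exchange[OF P _ _ \<nu>(2,3) z] \<nu>(1) affine_independent_subset
      by (metis less_irrefl)
  qed
  moreover have "{x. x extreme_point_of (convex hull (insert z P))} = P"
    using extreme_point_of_convex_hull_affine_independent[OF P(2)] hull_redundant[OF \<open>z \<in> convex hull P\<close>]
    by auto
  ultimately show ?thesis using P(1) z by (simp add: simplicial_circuit_def is_circuit_def)
qed

lemma affine_dependent_imageE:
  fixes q :: "'i \<Rightarrow> 'a::real_vector"
  assumes "finite T" "inj_on q T" "affine_dependent (q ` T)"
  obtains \<mu> where "sum \<mu> T = 0" "(\<Sum>j\<in>T. \<mu> j *\<^sub>R q j) = 0" "\<exists>j\<in>T. \<mu> j \<noteq> 0"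
proof -
  obtain U where U: "sum U (q ` T) = 0" "\<exists>v\<in>q ` T. U v \<noteq> 0" "(\<Sum>v\<in>q ` T. U v *\<^sub>R v) = 0"
    using affine_dependent_explicit_finite[of "q ` T"] assms(1,3) by auto
  then show ?thesis
    using that[of "U \<circ> q"] sum.reindex[OF assms(2), of U] sum.reindex[OF assms(2), of "\<lambda>v. U v *\<^sub>R v"]
    by auto
qed

section \<open>Supports of extreme rays\<close>

lemma acol_inj: "distinct_columns A \<Longrightarrow> inj (acol A)"
  unfolding inj_def distinct_columns_def acol_def by (metis (no_types, lifting) of_nat_eq_iff vec_eq_iff vec_lambda_beta)

lemma extreme_ray_nonneg_sig_rep_support:
  fixes A :: "nat^'m::finite^'n::finite"
  assumes ext: "extreme_ray_gen (C_POLY_SAGE A) c" and nonneg: "\<And>i. 0 \<le> sig_rep A c $ i"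
  shows "\<exists>j. {i. c $ i \<noteq> 0} = {j}"
proof -
  obtain j where j: "c $ j \<noteq> 0" using ext by (auto simp: extreme_ray_gen_def vec_eq_iff)
  have "restrict_coords P c \<in> C_POLY_SAGE A" for P
    using nonneg by (intro C_POLY_SAGE_if_sig_rep_in_C_AGE[of _ _ j] nonneg_in_C_AGE)
      (simp add: sig_rep_restrict_coords, simp add: restrict_coords_def)
  then have "i = j" if "c $ i \<noteq> 0" for i
    using extreme_ray_gen_restrict_coords[OF ext, of "\<lambda>i. i = j" j i] j that by auto
  then show ?thesis using j by blast
qed

lemma exists_perturbation:
  fixes \<nu> \<mu> :: "'i \<Rightarrow> real"
  assumes "finite T" "\<And>j. j \<in> T \<Longrightarrow> 0 < \<nu> j"
  shows "\<exists>t>0. \<forall>j\<in>T. 0 < \<nu> j + t * \<mu> j \<and> 0 < \<nu> j - t * \<mu> j"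
proof -
  have "\<forall>\<^sub>F t in at_right 0. \<forall>j\<in>T. 0 < \<nu> j + t * \<mu> j \<and> 0 < \<nu> j - t * \<mu> j"
  proof (intro eventually_ball_finite ballI eventually_conj)
    fix j assume "j \<in> T"
    have "((\<lambda>t. \<nu> j + t * \<mu> j) \<longlongrightarrow> \<nu> j) (at_right 0)" "((\<lambda>t. \<nu> j - t * \<mu> j) \<longlongrightarrow> \<nu> j) (at_right 0)"
      by (auto intro!: tendsto_eq_intros)
    then show "\<forall>\<^sub>F t in at_right 0. 0 < \<nu> j + t * \<mu> j" "\<forall>\<^sub>F t in at_right 0. 0 < \<nu> j - t * \<mu> j"
      using assms(2)[OF \<open>j \<in> T\<close>] by (auto dest: order_tendstoD(1))
  qed (use assms(1) in simp)
  then have "\<forall>\<^sub>F t in at_right 0. 0 < t \<and> (\<forall>j\<in>T. 0 < \<nu> j + t * \<mu> j \<and> 0 < \<nu> j - t * \<mu> j)"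
    by (intro eventually_conj eventually_at_right_less)
  then show ?thesis using eventually_happens'[OF trivial_limit_at_right_real] by blast
qed

locale extreme_ray_AGE_negative =
  fixes A :: "nat^'m::finite^'n::finite" and c d :: "real^'m" and k :: 'm and T :: "'m set"
  assumes ext: "extreme_ray_gen (C_POLY_SAGE A) c"
    and d: "d = sig_rep A c" and age: "d \<in> C_AGE A k" and neg: "d $ k < 0"
    and T: "T = {j. j \<noteq> k \<and> c $ j \<noteq> 0}"
begin

lemma support_eq: "{i. c $ i \<noteq> 0} = insert k T"
  using neg sig_rep_eq_0_iff[of A c k] by (auto simp: T d)

lemma T_even_pos:
  assumes "j \<in> T"
  shows "even_col A j" "0 < d $ j" "d $ j = c $ j"
proof -
  have "0 \<le> d $ j" "d $ j \<noteq> 0" using age assms by (auto simp: C_AGE_def T d sig_rep_eq_0_iff)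
  then show "0 < d $ j" by simp
  then show "even_col A j" by (auto simp: d sig_rep_nth split: if_splits)
  then show "d $ j = c $ j" by (simp add: d sig_rep_nth)
qed

lemma exists_weights:
  "\<exists>\<nu>. (\<forall>j\<in>T. 0 \<le> \<nu> j) \<and> sum \<nu> T = 1 \<and> (\<Sum>j\<in>T. \<nu> j *\<^sub>R acol A j) = acol A k
        \<and> - d $ k \<le> exp (- rel_entropy T \<nu> (\<lambda>j. d $ j))"
proof -
  have "- d $ k \<le> (\<Sum>j\<in>T. d $ j * exp ((acol A j - acol A k) \<bullet> y))" for y
  proof -
    have "(\<Sum>j\<in>UNIV - {k}. d $ j * exp (acol A j \<bullet> y)) = (\<Sum>j\<in>T. d $ j * exp (acol A j \<bullet> y))"
      by (rule sum.mono_neutral_right) (auto simp: T d sig_rep_eq_0_iff)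
    moreover have "0 \<le> Sig A d y" using age by (simp add: C_AGE_def C_NNS_def)
    ultimately have "- d $ k * exp (acol A k \<bullet> y) \<le> (\<Sum>j\<in>T. d $ j * exp (acol A j \<bullet> y))"
      by (simp add: Sig_def sum.remove[of UNIV k])
    then show ?thesis by (simp add: inner_diff_left exp_diff le_divide_eq flip: sum_divide_distrib)
  qed
  then obtain \<nu> where \<nu>: "\<forall>j\<in>T. 0 \<le> \<nu> j" "sum \<nu> T = 1"
      "(\<Sum>j\<in>T. \<nu> j *\<^sub>R (acol A j - acol A k)) = 0" "ln (- d $ k) \<le> - rel_entropy T \<nu> (\<lambda>j. d $ j)"
    using exists_entropy_certificate[of "- d $ k" T "\<lambda>j. d $ j" "\<lambda>j. acol A j - acol A k"]
      neg T_even_pos(2) by auto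
  moreover have "(\<Sum>j\<in>T. \<nu> j *\<^sub>R (acol A j - acol A k)) = (\<Sum>j\<in>T. \<nu> j *\<^sub>R acol A j) - acol A k"
    using \<nu>(2) by (simp add: scaleR_diff_right sum_subtractf flip: scaleR_sum_left)
  moreover have "- d $ k \<le> exp (- rel_entropy T \<nu> (\<lambda>j. d $ j))"
    using \<nu>(4) neg by (metis exp_le_cancel_iff exp_ln neg_0_less_iff_less)
  ultimately show ?thesis by auto
qed

text \<open>A weight \<open>\<nu> j0 = 0\<close> would let \<open>c\<close> split into its \<open>j0\<close>-th coordinate and the rest,
  both in the cone, the latter certified by the remaining weights.\<close>
lemma weights_pos:
  assumes \<nu>: "\<forall>j\<in>T. 0 \<le> \<nu> j" "sum \<nu> T = 1" "(\<Sum>j\<in>T. \<nu> j *\<^sub>R acol A j) = acol A k"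
      "- d $ k \<le> exp (- rel_entropy T \<nu> (\<lambda>j. d $ j))"
    and j0: "j0 \<in> T"
  shows "0 < \<nu> j0"
proof (rule ccontr)
  assume "\<not> 0 < \<nu> j0"
  define R where "R = {j\<in>T. 0 < \<nu> j}"
  have R: "R \<subseteq> T" "j0 \<notin> R" "k \<notin> R" using \<open>\<not> 0 < \<nu> j0\<close> by (auto simp: R_def T)
  have zero: "\<forall>j\<in>T - R. \<nu> j = 0" using \<nu>(1) by (auto simp: R_def)
  have sums: "sum \<nu> R = 1" "(\<Sum>j\<in>R. \<nu> j *\<^sub>R acol A j) = acol A k"
    using \<nu>(2,3) zero sum.mono_neutral_right[OF finite R(1), of \<nu>]
      sum.mono_neutral_right[OF finite R(1), of "\<lambda>j. \<nu> j *\<^sub>R acol A j"] by auto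
  have "rel_entropy R \<nu> (\<lambda>j. restrict_coords (\<lambda>i. i \<noteq> j0) d $ j) = rel_entropy R \<nu> (\<lambda>j. d $ j)"
    unfolding rel_entropy_def using R(2) by (intro sum.cong) (auto simp: restrict_coords_def)
  also have "\<dots> = rel_entropy T \<nu> (\<lambda>j. d $ j)"
    unfolding rel_entropy_def
    using sum.mono_neutral_right[OF finite R(1), of "\<lambda>j. \<nu> j * ln (\<nu> j) - \<nu> j * ln (d $ j)"] zero by simp
  finally have "restrict_coords (\<lambda>i. i \<noteq> j0) d \<in> C_AGE A k"
    using sums R age \<nu>(4) neg T_even_pos(2)
    by (intro C_AGE_entropy_certificate[of k R _ \<nu>]) (auto simp: restrict_coords_def R_def C_AGE_def)
  then have "restrict_coords (\<lambda>i. \<not> i = j0) c \<in> C_POLY_SAGE A"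
    by (intro C_POLY_SAGE_if_sig_rep_in_C_AGE) (simp add: sig_rep_restrict_coords flip: d)
  moreover have "restrict_coords (\<lambda>i. i = j0) c \<in> C_POLY_SAGE A"
    using T_even_pos(2)[OF j0]
    by (intro C_POLY_SAGE_if_sig_rep_in_C_AGE[of _ _ k] nonneg_in_C_AGE)
      (simp add: sig_rep_restrict_coords flip: d, simp add: restrict_coords_def)
  moreover have "c $ j0 \<noteq> 0" "c $ k \<noteq> 0" using j0 support_eq by (auto simp: T)
  ultimately have "k = j0" using extreme_ray_gen_restrict_coords[OF ext, of "\<lambda>i. i = j0" j0 k] by auto
  then show False using j0 by (simp add: T)
qed

lemma scaled_in_C_POLY_SAGE:
  assumes \<nu>: "\<forall>j\<in>T. 0 < \<nu> j" "sum \<nu> T = 1" "(\<Sum>j\<in>T. \<nu> j *\<^sub>R acol A j) = acol A k"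
    and \<rho>: "\<forall>j\<in>T. 0 < \<rho> j" and \<theta>: "0 \<le> \<theta>"
    and bound: "\<theta> * - d $ k \<le> exp (- rel_entropy T \<nu> (\<lambda>j. \<rho> j * d $ j))"
  shows "(\<chi> i. if i \<in> T then \<rho> i * c $ i else if i = k then \<theta> * c $ k else 0) \<in> C_POLY_SAGE A"
    (is "?x \<in> _")
proof (rule C_POLY_SAGE_if_sig_rep_in_C_AGE)
  have k: "k \<notin> T" by (simp add: T)
  have "sig_rep A ?x = (\<chi> i. if i \<in> T then \<rho> i * d $ i else if i = k then \<theta> * d $ k else 0)"
    using k \<theta> T_even_pos(1,3) by (auto simp: vec_eq_iff sig_rep_nth d abs_mult)
  also have "\<dots> \<in> C_AGE A k"
  proof (intro C_AGE_entropy_certificate[of k T _ \<nu>])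
    have "rel_entropy T \<nu> (\<lambda>j. (\<chi> i. if i \<in> T then \<rho> i * d $ i else if i = k then \<theta> * d $ k else 0) $ j)
        = rel_entropy T \<nu> (\<lambda>j. \<rho> j * d $ j)"
      unfolding rel_entropy_def by (intro sum.cong) auto
    then show "- (\<chi> i. if i \<in> T then \<rho> i * d $ i else if i = k then \<theta> * d $ k else 0) $ k
        \<le> exp (- rel_entropy T \<nu> (\<lambda>j. (\<chi> i. if i \<in> T then \<rho> i * d $ i else if i = k then \<theta> * d $ k else 0) $ j))"
      using k bound by simp
  qed (use k \<nu> \<rho> \<theta> T_even_pos(2) age in \<open>auto simp: C_AGE_def\<close>)
  finally show "sig_rep A ?x \<in> C_AGE A k" .
qed

text \<open>By AM-GM the two rescaled certificates split \<open>c\<close> into two cone elements, which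
  extremality forces to be proportional to \<open>c\<close>.\<close>
lemma split_certificates_eq:
  assumes \<nu>: "\<forall>j\<in>T. 0 < \<nu> j" "sum \<nu> T = 1" "- d $ k \<le> exp (- rel_entropy T \<nu> (\<lambda>j. d $ j))"
    and \<nu>1: "\<forall>j\<in>T. 0 < \<nu>1 j" "sum \<nu>1 T = 1" "(\<Sum>j\<in>T. \<nu>1 j *\<^sub>R acol A j) = acol A k"
    and \<nu>2: "\<forall>j\<in>T. 0 < \<nu>2 j" "sum \<nu>2 T = 1" "(\<Sum>j\<in>T. \<nu>2 j *\<^sub>R acol A j) = acol A k"
    and mid: "\<forall>j\<in>T. \<nu>1 j + \<nu>2 j = 2 * \<nu> j"
  shows "\<forall>j\<in>T. \<nu>1 j = \<nu> j"
proof -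
  obtain \<theta>1 \<theta>2 where \<theta>: "0 \<le> \<theta>1" "0 \<le> \<theta>2" "\<theta>1 + \<theta>2 = 1"
    "\<theta>1 * - d $ k \<le> exp (- rel_entropy T \<nu>1 (\<lambda>j. \<nu>1 j / (2 * \<nu> j) * d $ j))"
    "\<theta>2 * - d $ k \<le> exp (- rel_entropy T \<nu>2 (\<lambda>j. \<nu>2 j / (2 * \<nu> j) * d $ j))"
    using exists_convex_split_rel_entropy[OF \<nu>(1,2) _ \<nu>1(1) \<nu>2(1) mid \<nu>(3)] T_even_pos(2) by blast
  define x where "x \<nu>' \<theta> = (\<chi> i. if i \<in> T then \<nu>' i / (2 * \<nu> i) * c $ i else if i = k then \<theta> * c $ k else 0)"
    for \<nu>' \<theta>
  have "(c - x \<nu>1 \<theta>1) $ i = x \<nu>2 \<theta>2 $ i" for i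
  proof (cases "i \<in> T")
    case True
    then have "\<nu>1 i / (2 * \<nu> i) + \<nu>2 i / (2 * \<nu> i) = 1"
      using mid \<nu>(1) by (simp add: less_imp_neq[symmetric] flip: add_divide_distrib)
    then have "c $ i = \<nu>1 i / (2 * \<nu> i) * c $ i + \<nu>2 i / (2 * \<nu> i) * c $ i"
      by (metis distrib_right mult_1)
    then show ?thesis using True by (simp add: x_def algebra_simps)
  next
    case False
    then show ?thesis
      using support_eq \<theta>(3) by (auto simp: x_def algebra_simps simp flip: distrib_right)
  qed
  then have diff: "c - x \<nu>1 \<theta>1 = x \<nu>2 \<theta>2" by (simp add: vec_eq_iff)
  have "x \<nu>1 \<theta>1 \<in> C_POLY_SAGE A"
    unfolding x_def using \<nu>(1) \<nu>1 \<theta>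
    by (intro scaled_in_C_POLY_SAGE[where \<nu> = \<nu>1 and \<rho> = "\<lambda>j. \<nu>1 j / (2 * \<nu> j)"]) auto
  moreover have "x \<nu>2 \<theta>2 \<in> C_POLY_SAGE A"
    unfolding x_def using \<nu>(1) \<nu>2 \<theta>
    by (intro scaled_in_C_POLY_SAGE[where \<nu> = \<nu>2 and \<rho> = "\<lambda>j. \<nu>2 j / (2 * \<nu> j)"]) auto
  ultimately obtain s where s: "x \<nu>1 \<theta>1 = s *\<^sub>R c" using extreme_ray_gen_split[OF ext] diff by metis
  have ratio: "\<nu>1 j = 2 * s * \<nu> j" if "j \<in> T" for j
  proof -
    have "c $ j \<noteq> 0" "0 < \<nu> j" using that support_eq \<nu>(1) by auto
    moreover have "\<nu>1 j / (2 * \<nu> j) * c $ j = s * c $ j"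
      using arg_cong[OF s, of "\<lambda>v. v $ j"] that by (simp add: x_def)
    ultimately show ?thesis by (simp add: field_simps)
  qed
  then have "sum \<nu>1 T = 2 * s" using \<nu>(2) by (simp add: flip: sum_distrib_left)
  then show ?thesis using ratio \<nu>1(2) by simp
qed

text \<open>An affine dependence \<open>\<mu>\<close> of the columns in \<open>T\<close> would give two certificates
  \<open>\<nu> + t * \<mu>\<close> and \<open>\<nu> - t * \<mu>\<close> with midpoint \<open>\<nu>\<close>.\<close>
lemma affine_independent_columns:
  assumes dc: "distinct_columns A"
    and \<nu>: "\<forall>j\<in>T. 0 < \<nu> j" "sum \<nu> T = 1" "(\<Sum>j\<in>T. \<nu> j *\<^sub>R acol A j) = acol A k"
      "- d $ k \<le> exp (- rel_entropy T \<nu> (\<lambda>j. d $ j))"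
  shows "\<not> affine_dependent (acol A ` T)"
proof
  assume dep: "affine_dependent (acol A ` T)"
  have "inj_on (acol A) T" using acol_inj[OF dc] by (simp add: inj_on_def inj_def)
  then obtain \<mu> where \<mu>: "sum \<mu> T = 0" "(\<Sum>j\<in>T. \<mu> j *\<^sub>R acol A j) = 0" "\<exists>j\<in>T. \<mu> j \<noteq> 0"
    using affine_dependent_imageE[OF finite _ dep] by blast
  obtain t where t: "0 < t" "\<forall>j\<in>T. 0 < \<nu> j + t * \<mu> j \<and> 0 < \<nu> j - t * \<mu> j"
    using exists_perturbation[of T \<nu> \<mu>] \<nu>(1) by auto
  have sums: "sum (\<lambda>j. \<nu> j + t * \<mu> j) T = 1" "sum (\<lambda>j. \<nu> j - t * \<mu> j) T = 1"
    using \<nu>(2) \<mu>(1) by (simp_all add: sum.distrib sum_subtractf flip: sum_distrib_left)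
  have combs: "(\<Sum>j\<in>T. (\<nu> j + t * \<mu> j) *\<^sub>R acol A j) = acol A k"
    "(\<Sum>j\<in>T. (\<nu> j - t * \<mu> j) *\<^sub>R acol A j) = acol A k"
    using \<nu>(3) \<mu>(2)
    by (simp_all add: scaleR_add_left scaleR_diff_left sum.distrib sum_subtractf
        flip: scaleR_scaleR scaleR_sum_right)
  have "\<forall>j\<in>T. \<nu> j + t * \<mu> j = \<nu> j"
    using t(2) by (intro split_certificates_eq[OF \<nu>(1,2,4) _ sums(1) combs(1) _ sums(2) combs(2)]) auto
  then show False using t(1) \<mu>(3) by simp
qed

lemma support_simplicial_circuit:
  assumes dc: "distinct_columns A"
  shows "simplicial_circuit (acol A ` {i. c $ i \<noteq> 0})"
proof -
  obtain \<nu> where \<nu>: "\<forall>j\<in>T. 0 \<le> \<nu> j" "sum \<nu> T = 1" "(\<Sum>j\<in>T. \<nu> j *\<^sub>R acol A j) = acol A k"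
    "- d $ k \<le> exp (- rel_entropy T \<nu> (\<lambda>j. d $ j))"
    using exists_weights by blast
  have pos: "\<forall>j\<in>T. 0 < \<nu> j" using weights_pos[OF \<nu>] by blast
  have inj: "inj_on (acol A) (insert k T)" using acol_inj[OF dc] by (simp add: inj_on_def inj_def)
  then have inj_T: "inj_on (acol A) T" by (simp add: inj_on_insert)
  define \<nu>' where "\<nu>' p = \<nu> (inv_into T (acol A) p)" for p
  have \<nu>'_acol: "\<nu>' (acol A j) = \<nu> j" if "j \<in> T" for j
    using that inj_T by (simp add: \<nu>'_def)
  have "simplicial_circuit (insert (acol A k) (acol A ` T))"
  proof (rule simplicial_circuit_insert_convex_combination[where \<nu> = \<nu>'])
    show "\<not> affine_dependent (acol A ` T)" by (rule affine_independent_columns[OF dc pos \<nu>(2-4)])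
    show "acol A k \<notin> acol A ` T" using inj by (simp add: T)
    show "\<forall>p\<in>acol A ` T. 0 < \<nu>' p" using pos \<nu>'_acol by auto
    show "sum \<nu>' (acol A ` T) = 1" "(\<Sum>p\<in>acol A ` T. \<nu>' p *\<^sub>R p) = acol A k"
      using \<nu>(2,3) \<nu>'_acol by (simp_all add: sum.reindex[OF inj_T] cong: sum.cong)
  qed simp
  then show ?thesis by (simp add: support_eq)
qed

end

theorem mainTheorem17:
  fixes A :: "nat^'m::finite^'n::finite" and c :: "real^'m"
  assumes "distinct_columns A"
    and "extreme_ray_gen (C_POLY_SAGE A) c"
  shows "(\<exists>p. acol A ` {i. c $ i \<noteq> 0} = {p}) \<or>
         simplicial_circuit (acol A ` {i. c $ i \<noteq> 0})"
proof -
  obtain k where age: "sig_rep A c \<in> C_AGE A k"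
    using extreme_ray_sig_rep_in_C_AGE[OF assms(2)] by blast
  show ?thesis
  proof (cases "0 \<le> sig_rep A c $ k")
    case True
    then have "0 \<le> sig_rep A c $ i" for i using age by (cases "i = k") (auto simp: C_AGE_def)
    then obtain j where "{i. c $ i \<noteq> 0} = {j}" using extreme_ray_nonneg_sig_rep_support[OF assms(2)] by blast
    then show ?thesis by auto
  next
    case False
    then interpret extreme_ray_AGE_negative A c "sig_rep A c" k "{j. j \<noteq> k \<and> c $ j \<noteq> 0}"
      using assms(2) age by unfold_locales auto
    show ?thesis using support_simplicial_circuit[OF assms(1)] by simp
  qed
qed

end
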